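(* Let $n\ge 1$ and $\tau_i=-2\sin\frac{i\pi}{2n}$ for $0\le i\le n$. Let $\nu_0=\nu_n=\frac1{\sqrt2}$ and $\nu_j=1$ for $1\le j\le n-1$. Let $\bar S\in\mathbb{R}^{n\times n}$ have columns $\bar{\bm s}_1,\dots,\bar{\bm s}_n$, where $\bar{\bm s}_j=\nu_j\big(\sin\frac{j\pi}{2n},\sin\frac{3j\pi}{2n},\dots,\sin\frac{(2n-1)j\pi}{2n}\big)^{\mathsf T}$. Let $\bar C\in\mathbb{R}^{(n+1)\times(n+1)}$ have columns $\bar{\bm c}_0,\dots,\bar{\bm c}_n$, where $\bar{\bm c}_j=\nu_j\big(\frac1{\sqrt2},\cos\frac{j\pi}{n},\dots,\cos\frac{(n-1)j\pi}{n},\frac{(-1)^j}{\sqrt2}\big)^{\mathsf T}$. Let $\bar M=\mathrm{diag}(\sqrt2,1,\dots,1,\sqrt2)\in\mathbb{R}^{(n+1)\times(n+1)}$, and let $\bar B\in\mathbb{R}^{n\times(n+1)}$ have entries $\bar B_{k,k}=-1$, $\bar B_{k,k+1}=1$ ($1\le k\le n$), other entries zero. Then $$\bar S^{-1}\bar B\bar M\bar C=\bar S^{\mathsf T}\bar B\bar M\bar C^{-1}=\bar\Gamma,$$ where $\bar\Gamma=[\bm 0,\underline{\Lambda}]\in\mathbb{R}^{n\times(n+1)}$, $\bm 0$ is the zero column of length $n$, and $\underline{\Lambda}=\mathrm{diag}(\tau_1,\dots,\tau_n)$. *)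

theory Defs
  imports Complex_Main "Jordan_Normal_Form.Matrix"
begin

(* Matrices are Jordan_Normal_Form matrices, indexed from 0.
   Paper index i (1-based rows/cols of S, B) corresponds to i-1 here;
   paper indices 0..n of C, M keep their value. *)

definition tau :: "nat \<Rightarrow> nat \<Rightarrow> real" where
  "tau n i = - 2 * sin (real i * pi / (2 * real n))"

definition nu :: "nat \<Rightarrow> nat \<Rightarrow> real" where
  "nu n j = (if j = 0 \<or> j = n then 1 / sqrt 2 else 1)"

definition Sbar :: "nat \<Rightarrow> real mat" where
  "Sbar n = mat n n (\<lambda>(r, c). nu n (c + 1) *
      sin (real (2 * r + 1) * real (c + 1) * pi / (2 * real n)))"

definition Cbar :: "nat \<Rightarrow> real mat" where
  "Cbar n = mat (n + 1) (n + 1) (\<lambda>(r, j). nu n j *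
      (if r = 0 then 1 / sqrt 2
       else if r = n then (-1) ^ j / sqrt 2
       else cos (real r * real j * pi / real n)))"

definition Mbar :: "nat \<Rightarrow> real mat" where
  "Mbar n = mat (n + 1) (n + 1) (\<lambda>(r, c). if r = c then (if r = 0 \<or> r = n then sqrt 2 else 1) else 0)"

definition Bbar :: "nat \<Rightarrow> real mat" where
  "Bbar n = mat n (n + 1) (\<lambda>(k, c). if c = k then -1 else if c = k + 1 then 1 else 0)"

definition Gammabar :: "nat \<Rightarrow> real mat" where
  "Gammabar n = mat n (n + 1) (\<lambda>(k, c). if c = k + 1 then tau n c else 0)"

definition minv :: "real mat \<Rightarrow> real mat" where
  "minv A = (THE B. B \<in> carrier_mat (dim_row A) (dim_row A) \<and> inverts_mat A B \<and> inverts_mat B A)"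

end

theory Submission
  imports Defs "Jordan_Normal_Form.Determinant"
begin

(* By the product-to-sum
   formulas, discrete orthogonality reduces to the closed forms of the sums of
   cos((2r+1) m pi/(2n)) over r < n and of the trapezoid-weighted (weights nu^2) sums of
   cos(r m pi/n) over r <= n, for |m| <= 2n. This gives transpose(Sbar) * Sbar = (n/2) I and
   Cbar * Cbar = transpose(Cbar) * Cbar = (n/2) I, so the inverses are (2/n) transpose(Sbar)
   and (2/n) Cbar. Multiplying by Mbar cancels the row weights nu of Cbar, and Bbar takes
   forward differences of rows; cos((k+1) t) - cos(k t) = -2 sin(t/2) sin((2k+1) t/2) turns
   the j-th cosine column into tau_j times the j-th sine column. Hence
   transpose(Sbar) * Bbar * Mbar * Cbar = (n/2) Gammabar, and both identities follow. *)

lemma sum_cos_odd_multiples: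
  "2 * sin x * (\<Sum>r<n. cos (real (2 * r + 1) * x)) = sin (real (2 * n) * x)"
proof (induction n)
  case 0
  then show ?case by simp
next
  case (Suc n)
  have "2 * sin x * cos (real (2 * n + 1) * x)
      = sin (real (2 * n + 1) * x + x) - sin (real (2 * n + 1) * x - x)"
    by (simp add: sin_add sin_diff)
  also have "\<dots> = sin (real (2 * Suc n) * x) - sin (real (2 * n) * x)"
    by (simp add: algebra_simps)
  finally show ?case
    using Suc by (simp add: algebra_simps)
qed

lemma sum_cos_multiples:
  "2 * sin (x / 2) * (\<Sum>r\<le>n. cos (real r * x)) = sin ((real n + 1 / 2) * x) + sin (x / 2)"
proof (induction n)
  case 0
  then show ?case by simp
next
  case (Suc n)
  have "2 * sin (x / 2) * cos (real (Suc n) * x)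
      = sin (real (Suc n) * x + x / 2) - sin (real (Suc n) * x - x / 2)"
    by (simp add: sin_add sin_diff)
  also have "\<dots> = sin ((real (Suc n) + 1 / 2) * x) - sin ((real n + 1 / 2) * x)"
    by (simp add: algebra_simps)
  finally show ?case
    using Suc by (simp add: algebra_simps)
qed

lemma nu_squared: "(nu n r)\<^sup>2 = (if r = 0 \<or> r = n then 1 / 2 else 1)"
  by (simp add: nu_def power_divide)

lemma sum_nu_squared_mult:
  fixes f :: "nat \<Rightarrow> real"
  assumes "n > 0"
  shows "(\<Sum>r\<le>n. (nu n r)\<^sup>2 * f r) = (\<Sum>r\<le>n. f r) - f 0 / 2 - f n / 2"
proof -
  have "(\<Sum>r\<le>n. (nu n r)\<^sup>2 * f r)
      = (\<Sum>r\<le>n. f r - (if r = 0 then f r / 2 else 0) - (if r = n then f r / 2 else 0))"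
    using assms by (intro sum.cong) (auto simp: nu_squared)
  then show ?thesis
    by (simp add: sum_subtractf)
qed

lemma sum_nu_squared: "n > 0 \<Longrightarrow> (\<Sum>r\<le>n. (nu n r)\<^sup>2) = real n"
  using sum_nu_squared_mult[of n "\<lambda>_. 1"] by simp

lemma sum_nu_squared_cos_multiples:
  assumes "n > 0"
  shows "2 * sin (x / 2) * (\<Sum>r\<le>n. (nu n r)\<^sup>2 * cos (real r * x)) = sin (real n * x) * cos (x / 2)"
proof -
  have "2 * sin (x / 2) * (\<Sum>r\<le>n. (nu n r)\<^sup>2 * cos (real r * x))
      = 2 * sin (x / 2) * ((\<Sum>r\<le>n. cos (real r * x)) - 1 / 2 - cos (real n * x) / 2)"
    using sum_nu_squared_mult[OF assms, of "\<lambda>r. cos (real r * x)"] by simp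
  also have "\<dots> = 2 * sin (x / 2) * (\<Sum>r\<le>n. cos (real r * x)) - sin (x / 2) - cos (real n * x) * sin (x / 2)"
    by (simp add: algebra_simps)
  also have "\<dots> = sin ((real n + 1 / 2) * x) - cos (real n * x) * sin (x / 2)"
    using sum_cos_multiples[of x n] by linarith
  also have "\<dots> = sin (real n * x) * cos (x / 2)"
    by (simp add: distrib_right sin_add)
  finally show ?thesis .
qed

lemma sin_pi_fraction_neq_0:
  fixes m d :: int
  assumes "0 < \<bar>m\<bar>" "\<bar>m\<bar> < d"
  shows "sin (of_int m * pi / of_int d) \<noteq> 0"
proof
  assume "sin (of_int m * pi / of_int d) = 0"
  then have "sin (of_int m / of_int d * pi) = 0"
    by simp
  then have "of_int m / of_int d \<in> (\<int> :: real set)"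
    by (simp only: sin_times_pi_eq_0)
  moreover have "\<bar>of_int m / of_int d :: real\<bar> < 1"
  proof -
    have "0 < d"
      using assms by linarith
    then have "\<bar>of_int m / of_int d :: real\<bar> = of_int \<bar>m\<bar> / of_int d"
      by (simp add: abs_divide)
    also have "\<dots> < 1"
      using assms \<open>0 < d\<close> by simp
    finally show ?thesis .
  qed
  ultimately have "of_int m / of_int d = (0 :: real)"
    by (rule Ints_nonzero_abs_less1)
  with assms show False
    by simp
qed

lemma sum_cos_odd_multiples_pi:
  fixes m :: int
  assumes n: "n > 0" and m: "\<bar>m\<bar> \<le> 2 * int n"
  shows "(\<Sum>r<n. cos (real (2 * r + 1) * (of_int m * pi / (2 * real n))))
       = (if m = 0 then real n else if \<bar>m\<bar> = 2 * int n then - real n else 0)"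
proof -
  let ?x = "of_int m * pi / (2 * real n)"
  consider "m = 0" | "\<bar>m\<bar> = 2 * int n" | "0 < \<bar>m\<bar>" "\<bar>m\<bar> < 2 * int n"
    using m by linarith
  then show ?thesis
  proof cases
    case 1
    then show ?thesis by simp
  next
    case 2
    then have "m = 2 * int n \<or> m = - (2 * int n)"
      by arith
    then have "?x = pi \<or> ?x = - pi"
      using n by auto
    then have "cos (real (2 * r + 1) * ?x) = cos (real (2 * r + 1) * pi)" for r
      by (metis cos_minus mult_minus_right)
    then have "cos (real (2 * r + 1) * ?x) = -1" for r
      by (simp only: cos_npi) simp
    with 2 n show ?thesis by auto
  next
    case 3
    have "sin (real (2 * n) * ?x) = 0"
      using n by (simp add: mult.commute)
    moreover have "sin ?x \<noteq> 0"
      using sin_pi_fraction_neq_0[OF 3] by simp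
    ultimately show ?thesis
      using 3 sum_cos_odd_multiples[of ?x n] by simp
  qed
qed

lemma sum_nu_squared_cos_multiples_pi:
  fixes m :: int
  assumes n: "n > 0" and m: "\<bar>m\<bar> \<le> 2 * int n"
  shows "(\<Sum>r\<le>n. (nu n r)\<^sup>2 * cos (real r * (of_int m * pi / real n)))
       = (if m = 0 \<or> \<bar>m\<bar> = 2 * int n then real n else 0)"
proof -
  let ?x = "of_int m * pi / real n"
  consider "m = 0 \<or> \<bar>m\<bar> = 2 * int n" | "0 < \<bar>m\<bar>" "\<bar>m\<bar> < 2 * int n"
    using m by linarith
  then show ?thesis
  proof cases
    case 1
    then have "m = 0 \<or> m = 2 * int n \<or> m = - (2 * int n)"
      by arith
    then have "real r * ?x = 0 \<or> real r * ?x = real (2 * r) * pi \<or> real r * ?x = - (real (2 * r) * pi)" for r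
      using n by auto
    moreover have "cos (real (2 * r) * pi) = 1" for r
      by (simp only: cos_npi power_minus1_even)
    ultimately have "cos (real r * ?x) = 1" for r
      by (metis cos_zero cos_minus)
    with 1 show ?thesis
      using sum_nu_squared[OF n] by simp
  next
    case 2
    have "sin (real n * ?x) = 0"
      using n by (simp add: mult.commute)
    moreover have "sin (?x / 2) \<noteq> 0"
      using sin_pi_fraction_neq_0[OF 2] by (simp add: mult.commute)
    ultimately show ?thesis
      using 2 sum_nu_squared_cos_multiples[OF n, of ?x] by simp
  qed
qed

lemma sin_odd_multiples_orthogonal:
  assumes i: "1 \<le> i" "i \<le> n" and j: "1 \<le> j" "j \<le> n"
  shows "nu n i * nu n j * (\<Sum>r<n. sin (real (2 * r + 1) * real i * pi / (2 * real n))
                                 * sin (real (2 * r + 1) * real j * pi / (2 * real n)))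
       = (if i = j then real n / 2 else 0)"
proof -
  have n: "n > 0"
    using i by simp
  define d s where "d = int i - int j" and "s = int i + int j"
  have d: "\<bar>d\<bar> \<le> 2 * int n" "d = 0 \<longleftrightarrow> i = j" "\<bar>d\<bar> \<noteq> 2 * int n"
    using i j n by (auto simp: d_def)
  have s: "\<bar>s\<bar> \<le> 2 * int n" "s \<noteq> 0" "\<bar>s\<bar> = 2 * int n \<longleftrightarrow> i = n \<and> j = n"
    using i j by (auto simp: s_def)
  have "sin (real (2 * r + 1) * real i * pi / (2 * real n)) * sin (real (2 * r + 1) * real j * pi / (2 * real n))
      = (cos (real (2 * r + 1) * (of_int d * pi / (2 * real n)))
         - cos (real (2 * r + 1) * (of_int s * pi / (2 * real n)))) / 2" for r
  proof -
    have "real (2 * r + 1) * real i * pi / (2 * real n) - real (2 * r + 1) * real j * pi / (2 * real n)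
        = real (2 * r + 1) * (of_int d * pi / (2 * real n))"
      "real (2 * r + 1) * real i * pi / (2 * real n) + real (2 * r + 1) * real j * pi / (2 * real n)
        = real (2 * r + 1) * (of_int s * pi / (2 * real n))"
      using n by (simp_all add: d_def s_def field_simps)
    then show ?thesis
      by (simp only: sin_times_sin)
  qed
  then have "(\<Sum>r<n. sin (real (2 * r + 1) * real i * pi / (2 * real n))
                   * sin (real (2 * r + 1) * real j * pi / (2 * real n)))
      = ((\<Sum>r<n. cos (real (2 * r + 1) * (of_int d * pi / (2 * real n))))
         - (\<Sum>r<n. cos (real (2 * r + 1) * (of_int s * pi / (2 * real n))))) / 2" (is "?S = _")
    by (simp only: sum_subtractf sum_divide_distrib[symmetric])
  also have "\<dots> = ((if i = j then real n else 0) - (if i = n \<and> j = n then - real n else 0)) / 2"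
    unfolding sum_cos_odd_multiples_pi[OF n d(1)] sum_cos_odd_multiples_pi[OF n s(1)]
    using d s by simp
  finally have "?S = ((if i = j then real n else 0) - (if i = n \<and> j = n then - real n else 0)) / 2" .
  moreover have "nu n i * nu n j = (if i = n \<and> j = n then 1 / 2 else 1)" if "i = j"
    using that i nu_squared[of n i] by (simp add: power2_eq_square)
  ultimately show ?thesis
    by auto
qed

lemma cos_multiples_orthogonal:
  assumes n: "n > 0" and i: "i \<le> n" and j: "j \<le> n"
  shows "nu n i * nu n j * (\<Sum>r\<le>n. (nu n r)\<^sup>2 * (cos (real r * real i * pi / real n)
                                                * cos (real r * real j * pi / real n)))
       = (if i = j then real n / 2 else 0)"
proof -
  define d s where "d = int i - int j" and "s = int i + int j"
  have d: "\<bar>d\<bar> \<le> 2 * int n" "d = 0 \<longleftrightarrow> i = j" "\<bar>d\<bar> \<noteq> 2 * int n"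
    using i j n by (auto simp: d_def)
  have s: "\<bar>s\<bar> \<le> 2 * int n" "s = 0 \<or> \<bar>s\<bar> = 2 * int n \<longleftrightarrow> (i = 0 \<and> j = 0) \<or> (i = n \<and> j = n)"
    using i j by (auto simp: s_def)
  have "(nu n r)\<^sup>2 * (cos (real r * real i * pi / real n) * cos (real r * real j * pi / real n))
      = ((nu n r)\<^sup>2 * cos (real r * (of_int d * pi / real n))
         + (nu n r)\<^sup>2 * cos (real r * (of_int s * pi / real n))) / 2" for r
  proof -
    have "real r * real i * pi / real n - real r * real j * pi / real n = real r * (of_int d * pi / real n)"
      "real r * real i * pi / real n + real r * real j * pi / real n = real r * (of_int s * pi / real n)"
      using n by (simp_all add: d_def s_def field_simps)
    then show ?thesis
      by (simp only: cos_times_cos distrib_left add_divide_distrib times_divide_eq_right)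
  qed
  then have "(\<Sum>r\<le>n. (nu n r)\<^sup>2 * (cos (real r * real i * pi / real n) * cos (real r * real j * pi / real n)))
      = ((\<Sum>r\<le>n. (nu n r)\<^sup>2 * cos (real r * (of_int d * pi / real n)))
         + (\<Sum>r\<le>n. (nu n r)\<^sup>2 * cos (real r * (of_int s * pi / real n)))) / 2" (is "?S = _")
    by (simp only: sum.distrib sum_divide_distrib[symmetric])
  also have "\<dots> = ((if i = j then real n else 0)
                    + (if (i = 0 \<and> j = 0) \<or> (i = n \<and> j = n) then real n else 0)) / 2"
    unfolding sum_nu_squared_cos_multiples_pi[OF n d(1)] sum_nu_squared_cos_multiples_pi[OF n s(1)]
    using d s by simp
  finally have "?S = ((if i = j then real n else 0)
                      + (if (i = 0 \<and> j = 0) \<or> (i = n \<and> j = n) then real n else 0)) / 2" .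
  moreover have "nu n i * nu n j = (if i = 0 \<or> i = n then 1 / 2 else 1)" if "i = j"
    using that nu_squared[of n i] by (simp add: power2_eq_square)
  ultimately show ?thesis
    using n by auto
qed

lemma invertible_mat_minv_eqI:
  fixes A :: "real mat"
  assumes A: "A \<in> carrier_mat k k" and B: "B \<in> carrier_mat k k" and BA: "B * A = 1\<^sub>m k"
  shows "invertible_mat A \<and> minv A = B"
proof
  have AB: "A * B = 1\<^sub>m k"
    by (rule mat_mult_left_right_inverse[OF B A BA])
  then show "invertible_mat A"
    using A B BA by (auto simp: invertible_mat_def inverts_mat_def square_mat.simps)
  show "minv A = B"
    unfolding minv_def
  proof (rule the_equality)
    show "B \<in> carrier_mat (dim_row A) (dim_row A) \<and> inverts_mat A B \<and> inverts_mat B A"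
      using A B AB BA by (auto simp: inverts_mat_def)
  next
    fix B' assume "B' \<in> carrier_mat (dim_row A) (dim_row A) \<and> inverts_mat A B' \<and> inverts_mat B' A"
    then have B': "B' \<in> carrier_mat k k" and B'A: "B' * A = 1\<^sub>m k"
      using A by (auto simp: inverts_mat_def)
    have "B' = B' * (A * B)"
      using AB B' by simp
    also have "\<dots> = (B' * A) * B"
      using A B B' by simp
    also have "\<dots> = B"
      using B'A B by simp
    finally show "B' = B" .
  qed
qed

lemma invertible_mat_minv_smult_transpose:
  fixes A :: "real mat"
  assumes A: "A \<in> carrier_mat k k" and AA: "transpose_mat A * A = c \<cdot>\<^sub>m 1\<^sub>m k" and c: "c \<noteq> 0"
  shows "invertible_mat A \<and> minv A = (1 / c) \<cdot>\<^sub>m transpose_mat A"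
proof (rule invertible_mat_minv_eqI[OF A])
  show "(1 / c) \<cdot>\<^sub>m transpose_mat A \<in> carrier_mat k k"
    using A by simp
  have "(1 / c) \<cdot>\<^sub>m transpose_mat A * A = (1 / c) \<cdot>\<^sub>m (c \<cdot>\<^sub>m 1\<^sub>m k)"
    using A by (simp add: mult_smult_assoc_mat[of _ k k] AA)
  also have "\<dots> = 1\<^sub>m k"
    using c by (auto intro: eq_matI)
  finally show "(1 / c) \<cdot>\<^sub>m transpose_mat A * A = 1\<^sub>m k" .
qed

lemma Sbar_carrier [simp]: "Sbar n \<in> carrier_mat n n"
  by (simp add: Sbar_def)

lemma Cbar_carrier [simp]: "Cbar n \<in> carrier_mat (n + 1) (n + 1)"
  by (simp add: Cbar_def)

lemma Mbar_carrier [simp]: "Mbar n \<in> carrier_mat (n + 1) (n + 1)"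
  by (simp add: Mbar_def)

lemma Bbar_carrier [simp]: "Bbar n \<in> carrier_mat n (n + 1)"
  by (simp add: Bbar_def)

lemma dim_Sbar [simp]: "dim_row (Sbar n) = n" "dim_col (Sbar n) = n"
  by (simp_all add: Sbar_def)

lemma dim_Cbar [simp]: "dim_row (Cbar n) = n + 1" "dim_col (Cbar n) = n + 1"
  by (simp_all add: Cbar_def)

lemma dim_Mbar [simp]: "dim_row (Mbar n) = n + 1" "dim_col (Mbar n) = n + 1"
  by (simp_all add: Mbar_def)

lemma Cbar_entry:
  assumes "n \<ge> 1" "r \<le> n" "j \<le> n"
  shows "Cbar n $$ (r, j) = nu n r * nu n j * cos (real r * real j * pi / real n)"
proof -
  have "cos (real n * real j * pi / real n) = (-1) ^ j"
    using assms by (simp add: mult.commute)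
  then show ?thesis
    using assms by (auto simp: Cbar_def nu_def)
qed

lemma transpose_Cbar: "n \<ge> 1 \<Longrightarrow> transpose_mat (Cbar n) = Cbar n"
  by (rule eq_matI) (auto simp: Cbar_entry less_Suc_eq_le mult_ac)

lemma transpose_Sbar_mult_Sbar:
  assumes "n \<ge> 1"
  shows "transpose_mat (Sbar n) * Sbar n = (real n / 2) \<cdot>\<^sub>m 1\<^sub>m n"
proof (rule eq_matI)
  fix i j assume "i < dim_row ((real n / 2) \<cdot>\<^sub>m 1\<^sub>m n)" "j < dim_col ((real n / 2) \<cdot>\<^sub>m 1\<^sub>m n)"
  then have ij: "i < n" "j < n"
    by auto
  have "(transpose_mat (Sbar n) * Sbar n) $$ (i, j)
      = nu n (i + 1) * nu n (j + 1) * (\<Sum>r<n. sin (real (2 * r + 1) * real (i + 1) * pi / (2 * real n))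
                                            * sin (real (2 * r + 1) * real (j + 1) * pi / (2 * real n)))"
    using ij by (simp add: Sbar_def scalar_prod_def atLeast0LessThan sum_distrib_left mult_ac)
  also have "\<dots> = ((real n / 2) \<cdot>\<^sub>m 1\<^sub>m n) $$ (i, j)"
    using ij by (subst sin_odd_multiples_orthogonal) auto
  finally show "(transpose_mat (Sbar n) * Sbar n) $$ (i, j) = ((real n / 2) \<cdot>\<^sub>m 1\<^sub>m n) $$ (i, j)" .
qed auto

lemma transpose_Cbar_mult_Cbar:
  assumes n: "n \<ge> 1"
  shows "transpose_mat (Cbar n) * Cbar n = (real n / 2) \<cdot>\<^sub>m 1\<^sub>m (n + 1)"
proof (rule eq_matI)
  fix i j assume "i < dim_row ((real n / 2) \<cdot>\<^sub>m 1\<^sub>m (n + 1))" "j < dim_col ((real n / 2) \<cdot>\<^sub>m 1\<^sub>m (n + 1))"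
  then have ij: "i \<le> n" "j \<le> n"
    by auto
  have "(transpose_mat (Cbar n) * Cbar n) $$ (i, j) = (\<Sum>r\<le>n. Cbar n $$ (r, i) * Cbar n $$ (r, j))"
    using ij by (simp add: scalar_prod_def atLeast0LessThan lessThan_Suc_atMost)
  also have "\<dots> = nu n i * nu n j * (\<Sum>r\<le>n. (nu n r)\<^sup>2 * (cos (real r * real i * pi / real n)
                                                       * cos (real r * real j * pi / real n)))"
    using ij by (simp add: Cbar_entry[OF n] sum_distrib_left power2_eq_square mult_ac)
  also have "\<dots> = ((real n / 2) \<cdot>\<^sub>m 1\<^sub>m (n + 1)) $$ (i, j)"
    using n ij by (subst cos_multiples_orthogonal) auto
  finally show "(transpose_mat (Cbar n) * Cbar n) $$ (i, j) = ((real n / 2) \<cdot>\<^sub>m 1\<^sub>m (n + 1)) $$ (i, j)" .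
qed auto

lemma Bbar_mult:
  assumes "dim_row X = n + 1"
  shows "Bbar n * X = mat n (dim_col X) (\<lambda>(k, j). X $$ (k + 1, j) - X $$ (k, j))"
proof (rule eq_matI)
  fix k j assume "k < dim_row (mat n (dim_col X) (\<lambda>(k, j). X $$ (k + 1, j) - X $$ (k, j)))"
    "j < dim_col (mat n (dim_col X) (\<lambda>(k, j). X $$ (k + 1, j) - X $$ (k, j)))"
  then have kj: "k < n" "j < dim_col X"
    by auto
  have "(Bbar n * X) $$ (k, j)
      = (\<Sum>l<n + 1. (if l = k + 1 then X $$ (k + 1, j) else 0) - (if l = k then X $$ (k, j) else 0))"
    using assms kj by (auto simp: Bbar_def scalar_prod_def atLeast0LessThan intro!: sum.cong)
  also have "\<dots> = X $$ (k + 1, j) - X $$ (k, j)"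
    using kj by (simp add: sum_subtractf)
  finally show "(Bbar n * X) $$ (k, j) = mat n (dim_col X) (\<lambda>(k, j). X $$ (k + 1, j) - X $$ (k, j)) $$ (k, j)"
    using kj by simp
qed (use assms in \<open>auto simp: Bbar_def\<close>)

lemma Mbar_mult_Cbar:
  assumes n: "n \<ge> 1"
  shows "Mbar n * Cbar n = mat (n + 1) (n + 1) (\<lambda>(r, j). nu n j * cos (real r * real j * pi / real n))"
proof (rule eq_matI)
  fix r j assume "r < dim_row (mat (n + 1) (n + 1) (\<lambda>(r, j). nu n j * cos (real r * real j * pi / real n)))"
    "j < dim_col (mat (n + 1) (n + 1) (\<lambda>(r, j). nu n j * cos (real r * real j * pi / real n)))"
  then have rj: "r \<le> n" "j \<le> n"
    by auto
  have "(Mbar n * Cbar n) $$ (r, j) = (\<Sum>l\<le>n. Mbar n $$ (r, l) * Cbar n $$ (l, j))"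
    using rj by (simp add: scalar_prod_def atLeast0LessThan lessThan_Suc_atMost)
  also have "\<dots> = (\<Sum>l\<le>n. if l = r then Mbar n $$ (r, r) * Cbar n $$ (r, j) else 0)"
    using rj by (intro sum.cong) (auto simp: Mbar_def)
  also have "\<dots> = Mbar n $$ (r, r) * Cbar n $$ (r, j)"
    using rj by simp
  also have "\<dots> = nu n j * cos (real r * real j * pi / real n)"
    using rj by (simp add: Mbar_def Cbar_entry[OF n] nu_def)
  finally show "(Mbar n * Cbar n) $$ (r, j)
      = mat (n + 1) (n + 1) (\<lambda>(r, j). nu n j * cos (real r * real j * pi / real n)) $$ (r, j)"
    using rj by simp
qed (auto simp: Mbar_def)

lemma cos_diff_eq_tau_mult_sin:
  assumes "n \<ge> 1"
  shows "cos (real (k + 1) * real j * pi / real n) - cos (real k * real j * pi / real n)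
       = tau n j * sin (real (2 * k + 1) * real j * pi / (2 * real n))"
proof -
  have "cos (real (k + 1) * real j * pi / real n) - cos (real k * real j * pi / real n)
      = 2 * sin ((real (k + 1) * real j * pi / real n + real k * real j * pi / real n) / 2)
          * sin ((real k * real j * pi / real n - real (k + 1) * real j * pi / real n) / 2)"
    by (rule cos_diff_cos)
  also have "(real (k + 1) * real j * pi / real n + real k * real j * pi / real n) / 2
      = real (2 * k + 1) * real j * pi / (2 * real n)"
    using assms by (simp add: field_simps)
  also have "(real k * real j * pi / real n - real (k + 1) * real j * pi / real n) / 2
      = - (real j * pi / (2 * real n))"
    using assms by (simp add: field_simps)
  finally show ?thesis
    by (simp add: tau_def mult_ac)
qed

lemma Bbar_Mbar_Cbar:
  assumes n: "n \<ge> 1"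
  shows "Bbar n * Mbar n * Cbar n
       = mat n (n + 1) (\<lambda>(k, j). tau n j * nu n j * sin (real (2 * k + 1) * real j * pi / (2 * real n)))"
proof -
  have "Bbar n * Mbar n * Cbar n = Bbar n * (Mbar n * Cbar n)"
    by (rule assoc_mult_mat[OF Bbar_carrier Mbar_carrier Cbar_carrier])
  also have "\<dots> = mat n (n + 1) (\<lambda>(k, j). nu n j * (cos (real (k + 1) * real j * pi / real n)
                                                 - cos (real k * real j * pi / real n)))"
    by (rule eq_matI) (auto simp: Mbar_mult_Cbar[OF n] Bbar_mult right_diff_distrib)
  also have "\<dots> = mat n (n + 1) (\<lambda>(k, j). tau n j * nu n j * sin (real (2 * k + 1) * real j * pi / (2 * real n)))"
    unfolding cos_diff_eq_tau_mult_sin[OF n] by (simp only: mult_ac)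
  finally show ?thesis .
qed

lemma transpose_Sbar_Bbar_Mbar_Cbar:
  assumes n: "n \<ge> 1"
  shows "transpose_mat (Sbar n) * Bbar n * Mbar n * Cbar n = (real n / 2) \<cdot>\<^sub>m Gammabar n"
proof -
  have St: "transpose_mat (Sbar n) \<in> carrier_mat n n"
    by simp
  have BM: "Bbar n * Mbar n \<in> carrier_mat n (n + 1)"
    by (rule mult_carrier_mat[OF Bbar_carrier Mbar_carrier])
  have "transpose_mat (Sbar n) * Bbar n * Mbar n * Cbar n = transpose_mat (Sbar n) * (Bbar n * Mbar n * Cbar n)"
    by (simp only: assoc_mult_mat[OF St Bbar_carrier Mbar_carrier] assoc_mult_mat[OF St BM Cbar_carrier])
  also have "\<dots> = (real n / 2) \<cdot>\<^sub>m Gammabar n"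
  proof (rule eq_matI)
    fix i j assume "i < dim_row ((real n / 2) \<cdot>\<^sub>m Gammabar n)" "j < dim_col ((real n / 2) \<cdot>\<^sub>m Gammabar n)"
    then have ij: "i < n" "j \<le> n"
      by (auto simp: Gammabar_def)
    have "(transpose_mat (Sbar n) * (Bbar n * Mbar n * Cbar n)) $$ (i, j)
        = tau n j * (nu n (i + 1) * nu n j * (\<Sum>r<n. sin (real (2 * r + 1) * real (i + 1) * pi / (2 * real n))
                                                   * sin (real (2 * r + 1) * real j * pi / (2 * real n))))"
      using ij by (simp add: Bbar_Mbar_Cbar[OF n] Sbar_def scalar_prod_def atLeast0LessThan
          sum_distrib_left mult_ac)
    also have "\<dots> = ((real n / 2) \<cdot>\<^sub>m Gammabar n) $$ (i, j)"
    proof (cases "j = 0")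
      case True
      then show ?thesis
        using ij by (simp add: Gammabar_def tau_def)
    next
      case False
      then show ?thesis
        using ij by (subst sin_odd_multiples_orthogonal) (auto simp: Gammabar_def)
    qed
    finally show "(transpose_mat (Sbar n) * (Bbar n * Mbar n * Cbar n)) $$ (i, j)
        = ((real n / 2) \<cdot>\<^sub>m Gammabar n) $$ (i, j)" .
  qed (auto simp: Gammabar_def Bbar_def)
  finally show ?thesis .
qed

theorem lemma5p1:
  fixes n :: nat
  assumes "n \<ge> 1"
  shows "invertible_mat (Sbar n) \<and> invertible_mat (Cbar n) \<and>
         minv (Sbar n) * Bbar n * Mbar n * Cbar n = Gammabar n \<and>
         transpose_mat (Sbar n) * Bbar n * Mbar n * minv (Cbar n) = Gammabar n"
proof -
  have c: "real n / 2 \<noteq> 0"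
    using assms by simp
  have S: "invertible_mat (Sbar n)" "minv (Sbar n) = (2 / real n) \<cdot>\<^sub>m transpose_mat (Sbar n)"
    using invertible_mat_minv_smult_transpose[OF Sbar_carrier transpose_Sbar_mult_Sbar[OF assms] c]
    by simp_all
  have C: "invertible_mat (Cbar n)" "minv (Cbar n) = (2 / real n) \<cdot>\<^sub>m Cbar n"
    using invertible_mat_minv_smult_transpose[OF Cbar_carrier transpose_Cbar_mult_Cbar[OF assms] c]
    by (simp_all add: transpose_Cbar[OF assms])
  have Gamma: "(2 / real n) \<cdot>\<^sub>m (transpose_mat (Sbar n) * Bbar n * Mbar n * Cbar n) = Gammabar n"
    unfolding transpose_Sbar_Bbar_Mbar_Cbar[OF assms] using assms by (auto intro: eq_matI)
  have St: "transpose_mat (Sbar n) \<in> carrier_mat n n"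
    by simp
  have StB: "transpose_mat (Sbar n) * Bbar n \<in> carrier_mat n (n + 1)"
    by (rule mult_carrier_mat[OF St Bbar_carrier])
  have StBM: "transpose_mat (Sbar n) * Bbar n * Mbar n \<in> carrier_mat n (n + 1)"
    by (rule mult_carrier_mat[OF StB Mbar_carrier])
  have "minv (Sbar n) * Bbar n * Mbar n * Cbar n
      = (2 / real n) \<cdot>\<^sub>m (transpose_mat (Sbar n) * Bbar n * Mbar n * Cbar n)"
    unfolding S(2)
    by (simp only: mult_smult_assoc_mat[OF St Bbar_carrier] mult_smult_assoc_mat[OF StB Mbar_carrier]
        mult_smult_assoc_mat[OF StBM Cbar_carrier])
  moreover have "transpose_mat (Sbar n) * Bbar n * Mbar n * minv (Cbar n)
      = (2 / real n) \<cdot>\<^sub>m (transpose_mat (Sbar n) * Bbar n * Mbar n * Cbar n)"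
    unfolding C(2) by (rule mult_smult_distrib[OF StBM Cbar_carrier])
  ultimately show ?thesis
    using S(1) C(1) Gamma by simp
qed

end
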